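(* Let $M$ be a nonnegative integer, $k=(k_\alpha)_{\alpha\in R^-}\in\mathbb N^{q-1}$ with $\sum_{\alpha\in R^-}\alpha\cdot k_\alpha=0$ in $R$, and $\Gamma$ a finite index set. Suppose that for each $\alpha\in R^-$ and $i\in\Gamma$ we are given nonnegative integers $x_i^{(\alpha)}$ such that $\sum_{i\in\Gamma}x_i^{(\alpha)}=k_\alpha M$ for all $\alpha\in R^-$ and $\sum_{\alpha\in R^-}x_i^{(\alpha)}\le M$ for all $i\in\Gamma$. Then there exist nonnegative integers $w_a$, $a\in\mathcal C_\Gamma^{(k)}$, such that $\sum_{a\in\mathcal C_\Gamma^{(k)}}w_a=M$ and, for all $\alpha\in R^-$ and $i\in\Gamma$, $x_i^{(\alpha)}=\sum_{a\in\mathcal C_\Gamma^{(k)},\,a_i=\alpha}w_a$.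
   Context: $R$ is a finite ring with $q$ elements, $R^-=R\setminus\{0\}$. For $\alpha\in R$ and $k\in\mathbb N$, $\alpha\cdot k$ denotes the $k$-fold sum $\alpha+\cdots+\alpha$ (equal to $0$ if $k=0$). For a finite index set $\Gamma$, $\mathcal C_\Gamma=\{a=(a_i)_{i\in\Gamma}\in R^\Gamma:\sum_{i\in\Gamma}a_i=0\}$, $\kappa_\Gamma(a)\in\mathbb N^{q-1}$ has coordinates $\kappa_\Gamma(a)_\alpha=|\{i\in\Gamma:a_i=\alpha\}|$ ($\alpha\in R^-$), and $\mathcal C_\Gamma^{(k)}=\{a\in\mathcal C_\Gamma:\kappa_\Gamma(a)=k\}$. *)

theory Defs
  imports Main
begin

definition rep_add :: "'a::comm_monoid_add \<Rightarrow> nat \<Rightarrow> 'a" where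
  "rep_add \<alpha> k = (\<Sum>j<k. \<alpha>)"

text \<open>Vectors in R^Gamma are functions vanishing outside Gamma.\<close>
definition CC :: "'i set \<Rightarrow> ('i \<Rightarrow> 'a::ring_1) set" where
  "CC \<Gamma> = {a. (\<forall>i. i \<notin> \<Gamma> \<longrightarrow> a i = 0) \<and> (\<Sum>i\<in>\<Gamma>. a i) = 0}"

definition kappa :: "'i set \<Rightarrow> ('i \<Rightarrow> 'a::ring_1) \<Rightarrow> 'a \<Rightarrow> nat" where
  "kappa \<Gamma> a \<alpha> = card {i\<in>\<Gamma>. a i = \<alpha>}"

text \<open>C_Gamma^(k); only the values of k on nonzero ring elements matter.\<close>
definition CCk :: "'i set \<Rightarrow> ('a::ring_1 \<Rightarrow> nat) \<Rightarrow> ('i \<Rightarrow> 'a) set" where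
  "CCk \<Gamma> k = {a\<in>CC \<Gamma>. \<forall>\<alpha>. \<alpha> \<noteq> 0 \<longrightarrow> kappa \<Gamma> a \<alpha> = k \<alpha>}"

end

theory Submission
  imports Defs
begin

text \<open>View x as a nonnegative integer matrix with rows indexed by R and columns by Gamma,
  and add a slack row at 0 that tops every column sum up to M; row alpha then sums to
  k alpha * M. Hall's marriage theorem, applied to k alpha copies of each row alpha, yields a map
  f : Gamma -> R whose fibres have sizes k alpha and which stays inside the support of the
  matrix. Subtracting the indicator matrix of f lowers M by one, so by induction the matrix is
  the sum of M such maps. Extended by 0 outside Gamma, each map lies in C_Gamma^(k) because
  the sum of alpha * k alpha vanishes, and w a counts how often the vector a occurs.\<close>

definition hall_condition :: "'p set \<Rightarrow> ('p \<Rightarrow> 'b set) \<Rightarrow> bool" where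
  "hall_condition A F \<longleftrightarrow> (\<forall>S\<subseteq>A. card S \<le> card (\<Union>(F ` S)))"

lemma inj_on_if_Un:
  assumes "inj_on g1 S" "inj_on g2 T" "S \<inter> T = {}" "g1 ` S \<inter> g2 ` T = {}"
  shows "inj_on (\<lambda>p. if p \<in> S then g1 p else g2 p) (S \<union> T)" (is "inj_on ?g _")
proof -
  have "inj_on ?g S" "?g ` S = g1 ` S" using assms(1) by (auto simp: inj_on_def)
  moreover have "inj_on ?g T" "?g ` T = g2 ` T"
    using assms(2,3) by (auto simp: inj_on_def disjoint_iff)
  ultimately show ?thesis using assms(3,4) by (simp add: inj_on_Un Diff_triv Int_commute)
qed

lemma hall_condition_Diff_critical:
  assumes "finite A" "\<forall>p\<in>A. finite (F p)" "hall_condition A F"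
    and "S \<subseteq> A" "card (\<Union>(F ` S)) = card S"
  shows "hall_condition (A - S) (\<lambda>p. F p - \<Union>(F ` S))"
  unfolding hall_condition_def
proof (intro allI impI)
  fix T assume T: "T \<subseteq> A - S"
  have TS: "T \<union> S \<subseteq> A" using T assms(4) by auto
  have "finite (T \<union> S)" using TS assms(1) by (rule finite_subset)
  then have fin: "finite (\<Union>(F ` (T \<union> S)))" using TS assms(2) by blast
  have "(\<Union>p\<in>T. F p - \<Union>(F ` S)) = \<Union>(F ` (T \<union> S)) - \<Union>(F ` S)" by auto
  then have "card (\<Union>p\<in>T. F p - \<Union>(F ` S)) = card (\<Union>(F ` (T \<union> S))) - card S"
    using fin assms(5) by (simp add: card_Diff_subset finite_subset[OF _ fin])
  moreover have "card (T \<union> S) = card T + card S"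
    using T assms(1,4) by (intro card_Un_disjoint) (auto intro: finite_subset)
  moreover have "card (T \<union> S) \<le> card (\<Union>(F ` (T \<union> S)))"
    using assms(3) TS unfolding hall_condition_def by blast
  ultimately show "card T \<le> card (\<Union>p\<in>T. F p - \<Union>(F ` S))" by linarith
qed

lemma hall_condition_remove_one:
  assumes "finite A" "\<forall>p\<in>A. finite (F p)" "a \<in> A"
    and surplus: "\<And>S. S \<subseteq> A \<Longrightarrow> S \<noteq> {} \<Longrightarrow> S \<noteq> A \<Longrightarrow> card S < card (\<Union>(F ` S))"
  shows "hall_condition (A - {a}) (\<lambda>p. F p - {b})"
  unfolding hall_condition_def
proof (intro allI impI)
  fix T assume T: "T \<subseteq> A - {a}"
  show "card T \<le> card (\<Union>p\<in>T. F p - {b})"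
  proof (cases "T = {}")
    case False
    have "card T < card (\<Union>(F ` T))" using T False assms(3) by (intro surplus) auto
    moreover have "finite T" using T assms(1) by (meson Diff_subset finite_subset)
    then have "finite (\<Union>(F ` T))" using T assms(2) by blast
    moreover have "(\<Union>p\<in>T. F p - {b}) = \<Union>(F ` T) - {b}" by auto
    ultimately show ?thesis by (auto simp: card_Diff_singleton_if)
  qed simp
qed

text \<open>Halmos and Vaughan's induction: split at a critical proper subset if there is one,
  otherwise every proper subset has surplus and any a can be matched to any b \<in> F a.\<close>

theorem hall_marriage:
  assumes "finite A" "\<forall>p\<in>A. finite (F p)" "hall_condition A F"
  shows "\<exists>g. inj_on g A \<and> (\<forall>p\<in>A. g p \<in> F p)"
  using assms
proof (induction "card A" arbitrary: A F rule: less_induct)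
  case less
  show ?case
  proof (cases "\<exists>S. S \<subseteq> A \<and> S \<noteq> {} \<and> S \<noteq> A \<and> card (\<Union>(F ` S)) \<le> card S")
    case True
    then obtain S where S: "S \<subseteq> A" "S \<noteq> {}" "S \<noteq> A" "card (\<Union>(F ` S)) \<le> card S" by blast
    have finS: "finite S" using S(1) less.prems(1) by (rule finite_subset)
    have critical: "card (\<Union>(F ` S)) = card S"
      using S less.prems(3) unfolding hall_condition_def by (simp add: le_antisym)
    have "card S < card A" using S less.prems(1) by (simp add: psubset_card_mono psubsetI)
    moreover have "hall_condition S F" using S(1) less.prems(3) unfolding hall_condition_def by auto
    ultimately obtain g1 where g1: "inj_on g1 S" "\<forall>p\<in>S. g1 p \<in> F p"
      using less.hyps[OF _ finS] less.prems(2) S(1) by blast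
    have "0 < card S" using finS S(2) by (simp add: card_gt_0_iff)
    then have "card (A - S) < card A"
      using card_Diff_subset[OF finS S(1)] card_mono[OF less.prems(1) S(1)] by linarith
    then obtain g2 where g2: "inj_on g2 (A - S)" "\<forall>p\<in>A - S. g2 p \<in> F p - \<Union>(F ` S)"
      using less.hyps[OF _ _ _ hall_condition_Diff_critical[OF less.prems S(1) critical]]
        less.prems(1,2) by blast
    have "inj_on (\<lambda>p. if p \<in> S then g1 p else g2 p) (S \<union> (A - S))"
      using g1 g2 by (intro inj_on_if_Un) auto
    then show ?thesis
      using g1 g2 S(1) by (intro exI[of _ "\<lambda>p. if p \<in> S then g1 p else g2 p"]) (auto simp: Un_absorb1)
  next
    case False
    then have surplus: "card S < card (\<Union>(F ` S))" if "S \<subseteq> A" "S \<noteq> {}" "S \<noteq> A" for S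
      using that by (meson not_le)
    show ?thesis
    proof (cases "A = {}")
      case False
      then obtain a where a: "a \<in> A" by blast
      have "card {a} \<le> card (\<Union>(F ` {a}))" using less.prems(3) a unfolding hall_condition_def by blast
      then obtain b where b: "b \<in> F a" by fastforce
      have "card (A - {a}) < card A" using less.prems(1) a by (rule card_Diff1_less)
      then obtain g where g: "inj_on g (A - {a})" "\<forall>p\<in>A - {a}. g p \<in> F p - {b}"
        using less.hyps[OF _ _ _ hall_condition_remove_one[OF less.prems(1,2) a surplus]]
          less.prems(1,2) by blast
      have "inj_on (\<lambda>p. if p \<in> {a} then b else g p) ({a} \<union> (A - {a}))"
        using g by (intro inj_on_if_Un) auto
      then show ?thesis
        using g a b by (intro exI[of _ "\<lambda>p. if p \<in> {a} then b else g p"]) (auto simp: insert_absorb)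
    qed simp
  qed
qed

lemma sum_row_factors_eq_card:
  fixes x :: "'a::finite \<Rightarrow> 'i \<Rightarrow> nat"
  assumes "\<And>\<alpha>. (\<Sum>i\<in>\<Gamma>. x \<alpha> i) = r \<alpha> * M"
    and "\<And>i. i \<in> \<Gamma> \<Longrightarrow> (\<Sum>\<alpha>\<in>UNIV. x \<alpha> i) = M" and "0 < M"
  shows "(\<Sum>\<alpha>\<in>UNIV. r \<alpha>) = card \<Gamma>"
proof -
  have "(\<Sum>\<alpha>\<in>UNIV. r \<alpha>) * M = (\<Sum>\<alpha>\<in>UNIV. \<Sum>i\<in>\<Gamma>. x \<alpha> i)"
    by (simp add: assms(1) sum_distrib_right)
  also have "\<dots> = (\<Sum>i\<in>\<Gamma>. \<Sum>\<alpha>\<in>UNIV. x \<alpha> i)" by (rule sum.swap)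
  also have "\<dots> = card \<Gamma> * M" using assms(2) by simp
  finally show ?thesis using assms(3) by simp
qed

lemma hall_condition_row_supports:
  fixes x :: "'a::finite \<Rightarrow> 'i \<Rightarrow> nat"
  assumes "finite \<Gamma>" "\<And>\<alpha>. (\<Sum>i\<in>\<Gamma>. x \<alpha> i) = r \<alpha> * M"
    and "\<And>i. i \<in> \<Gamma> \<Longrightarrow> (\<Sum>\<alpha>\<in>UNIV. x \<alpha> i) = M" and "0 < M"
  shows "hall_condition (SIGMA \<alpha>:UNIV. {..<r \<alpha>}) (\<lambda>p. {i\<in>\<Gamma>. 0 < x (fst p) i})"
  unfolding hall_condition_def
proof (intro allI impI)
  fix S assume S: "S \<subseteq> (SIGMA \<alpha>:UNIV. {..<r \<alpha>})"
  define N where "N = {i\<in>\<Gamma>. \<exists>\<alpha>\<in>fst ` S. 0 < x \<alpha> i}"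
  have "S \<subseteq> (SIGMA \<alpha>:fst ` S. {..<r \<alpha>})" using S by force
  then have "card S \<le> (\<Sum>\<alpha>\<in>fst ` S. r \<alpha>)"
    using card_mono[of "SIGMA \<alpha>:fst ` S. {..<r \<alpha>}" S] by (simp add: card_SigmaI)
  moreover have "(\<Sum>\<alpha>\<in>fst ` S. r \<alpha>) * M \<le> card N * M"
  proof -
    have "(\<Sum>\<alpha>\<in>fst ` S. r \<alpha>) * M = (\<Sum>\<alpha>\<in>fst ` S. \<Sum>i\<in>N. x \<alpha> i)"
      unfolding sum_distrib_right assms(2)[symmetric] using assms(1)
      by (intro sum.cong refl sum.mono_neutral_right) (auto simp: N_def)
    also have "\<dots> \<le> (\<Sum>\<alpha>\<in>UNIV. \<Sum>i\<in>N. x \<alpha> i)" by (rule sum_mono2) auto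
    also have "\<dots> = (\<Sum>i\<in>N. \<Sum>\<alpha>\<in>UNIV. x \<alpha> i)" by (rule sum.swap)
    also have "\<dots> = card N * M" using assms(3) by (simp add: N_def)
    finally show ?thesis .
  qed
  moreover have "\<Union>((\<lambda>p. {i\<in>\<Gamma>. 0 < x (fst p) i}) ` S) = N" by (auto simp: N_def)
  ultimately show "card S \<le> card (\<Union>((\<lambda>p. {i\<in>\<Gamma>. 0 < x (fst p) i}) ` S))"
    using assms(4) by simp
qed

lemma exists_assignment_in_support:
  fixes x :: "'a::finite \<Rightarrow> 'i \<Rightarrow> nat"
  assumes "finite \<Gamma>" "\<And>\<alpha>. (\<Sum>i\<in>\<Gamma>. x \<alpha> i) = r \<alpha> * M"
    and "\<And>i. i \<in> \<Gamma> \<Longrightarrow> (\<Sum>\<alpha>\<in>UNIV. x \<alpha> i) = M" and "0 < M"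
  shows "\<exists>f. (\<forall>\<alpha>. card {i\<in>\<Gamma>. f i = \<alpha>} = r \<alpha>) \<and> (\<forall>i\<in>\<Gamma>. 0 < x (f i) i)"
proof -
  define A where "A = (SIGMA \<alpha>:UNIV. {..<r \<alpha>})"
  obtain g where g: "inj_on g A" "\<forall>p\<in>A. g p \<in> {i\<in>\<Gamma>. 0 < x (fst p) i}"
    using hall_marriage[OF _ _ hall_condition_row_supports[OF assms]] assms(1)
    unfolding A_def by auto
  have "card (g ` A) = card \<Gamma>"
    using card_image[OF g(1)] sum_row_factors_eq_card[OF assms(2-4)]
    by (simp add: A_def card_SigmaI)
  moreover have "g ` A \<subseteq> \<Gamma>" using g(2) by auto
  ultimately have bij: "bij_betw g A \<Gamma>"
    using g(1) assms(1) by (simp add: bij_betw_def card_subset_eq)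
  define f where "f i = fst (inv_into A g i)" for i
  have "card {i\<in>\<Gamma>. f i = \<alpha>} = r \<alpha>" for \<alpha>
  proof -
    have fibre: "{i\<in>\<Gamma>. f i = \<alpha>} = g ` ({\<alpha>} \<times> {..<r \<alpha>})"
      using bij bij_betw_inv_into_left[OF bij] bij_betw_inv_into_right[OF bij]
        bij_betw_imp_surj_on[OF bij_betw_inv_into[OF bij]]
      unfolding f_def A_def by (force simp: bij_betw_def)
    have "inj_on g ({\<alpha>} \<times> {..<r \<alpha>})" using g(1) by (rule inj_on_subset) (auto simp: A_def)
    then show ?thesis unfolding fibre by (simp add: card_image)
  qed
  moreover have "0 < x (f i) i" if "i \<in> \<Gamma>" for i
    using g(2) bij_betw_inv_into_right[OF bij that] bij_betw_apply[OF bij_betw_inv_into[OF bij] that]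
    unfolding f_def by force
  ultimately show ?thesis by blast
qed

lemma decomposition_into_assignments:
  fixes x :: "'a::finite \<Rightarrow> 'i \<Rightarrow> nat"
  assumes "finite \<Gamma>" "\<And>\<alpha>. (\<Sum>i\<in>\<Gamma>. x \<alpha> i) = r \<alpha> * M"
    and "\<And>i. i \<in> \<Gamma> \<Longrightarrow> (\<Sum>\<alpha>\<in>UNIV. x \<alpha> i) = M"
  shows "\<exists>fs. length fs = M \<and> (\<forall>f\<in>set fs. \<forall>\<alpha>. card {i\<in>\<Gamma>. f i = \<alpha>} = r \<alpha>)
     \<and> (\<forall>\<alpha>. \<forall>i\<in>\<Gamma>. x \<alpha> i = length (filter (\<lambda>f. f i = \<alpha>) fs))"
  using assms(2,3)
proof (induction M arbitrary: x)
  case 0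
  then show ?case by simp
next
  case (Suc M)
  obtain f where f: "\<forall>\<alpha>. card {i\<in>\<Gamma>. f i = \<alpha>} = r \<alpha>" "\<forall>i\<in>\<Gamma>. 0 < x (f i) i"
    using exists_assignment_in_support[OF assms(1) Suc.prems] by auto
  define x' where "x' \<alpha> i = x \<alpha> i - (if f i = \<alpha> then 1 else 0)" for \<alpha> i
  have x_eq: "x \<alpha> i = x' \<alpha> i + (if f i = \<alpha> then 1 else 0)" if "i \<in> \<Gamma>" for \<alpha> i
    using f(2) that unfolding x'_def by fastforce
  have "(\<Sum>i\<in>\<Gamma>. x' \<alpha> i) = r \<alpha> * M" for \<alpha>
  proof -
    have "(\<Sum>i\<in>\<Gamma>. x \<alpha> i) = (\<Sum>i\<in>\<Gamma>. x' \<alpha> i) + card {i\<in>\<Gamma>. f i = \<alpha>}"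
      using x_eq assms(1) by (simp add: sum.distrib sum.If_cases Int_def)
    then show ?thesis using Suc.prems(1)[of \<alpha>] f(1) by simp
  qed
  moreover have "(\<Sum>\<alpha>\<in>UNIV. x' \<alpha> i) = M" if i: "i \<in> \<Gamma>" for i
    using Suc.prems(2)[OF i] x_eq[OF i] by (simp add: sum.distrib)
  ultimately obtain fs where fs: "length fs = M" "\<forall>f\<in>set fs. \<forall>\<alpha>. card {i\<in>\<Gamma>. f i = \<alpha>} = r \<alpha>"
     "\<forall>\<alpha>. \<forall>i\<in>\<Gamma>. x' \<alpha> i = length (filter (\<lambda>f. f i = \<alpha>) fs)"
    using Suc.IH by blast
  show ?case
    by (rule exI[of _ "f # fs"]) (use fs f x_eq in auto)
qed

lemma decomposition_into_partial_assignments: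
  fixes x :: "'a::{zero,finite} \<Rightarrow> 'i \<Rightarrow> nat"
  assumes "finite \<Gamma>" "\<And>\<alpha>. \<alpha> \<noteq> 0 \<Longrightarrow> (\<Sum>i\<in>\<Gamma>. x \<alpha> i) = k \<alpha> * M"
    and "\<And>i. i \<in> \<Gamma> \<Longrightarrow> (\<Sum>\<alpha>\<in>UNIV - {0}. x \<alpha> i) \<le> M"
  shows "\<exists>fs. length fs = M \<and> (\<forall>f\<in>set fs. \<forall>\<alpha>. \<alpha> \<noteq> 0 \<longrightarrow> card {i\<in>\<Gamma>. f i = \<alpha>} = k \<alpha>)
     \<and> (\<forall>\<alpha> i. \<alpha> \<noteq> 0 \<longrightarrow> i \<in> \<Gamma> \<longrightarrow> x \<alpha> i = length (filter (\<lambda>f. f i = \<alpha>) fs))"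
proof -
  define c where "c i = (\<Sum>\<alpha>\<in>UNIV - {0}. x \<alpha> i)" for i
  define K where "K = (\<Sum>\<alpha>\<in>UNIV - {0}. k \<alpha>)"
  define r where "r \<alpha> = (if \<alpha> = 0 then card \<Gamma> - K else k \<alpha>)" for \<alpha>
  define x' where "x' \<alpha> i = (if \<alpha> = 0 then M - c i else x \<alpha> i)" for \<alpha> i
  have "(\<Sum>i\<in>\<Gamma>. x' \<alpha> i) = r \<alpha> * M" for \<alpha>
  proof (cases "\<alpha> = 0")
    case True
    have "(\<Sum>i\<in>\<Gamma>. c i) = K * M"
      unfolding c_def K_def sum_distrib_right sum.swap[of _ _ \<Gamma>] using assms(2) by simp
    moreover have "(\<Sum>i\<in>\<Gamma>. M - c i) + (\<Sum>i\<in>\<Gamma>. c i) = card \<Gamma> * M"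
      unfolding sum.distrib[symmetric] using assms(3) by (simp add: c_def)
    ultimately show ?thesis using True by (simp add: x'_def r_def diff_mult_distrib)
  qed (simp add: x'_def r_def assms(2))
  moreover have "(\<Sum>\<alpha>\<in>UNIV. x' \<alpha> i) = M" if i: "i \<in> \<Gamma>" for i
  proof -
    have "(\<Sum>\<alpha>\<in>UNIV. x' \<alpha> i) = x' 0 i + (\<Sum>\<alpha>\<in>UNIV - {0}. x' \<alpha> i)"
      by (rule sum.remove) auto
    also have "(\<Sum>\<alpha>\<in>UNIV - {0}. x' \<alpha> i) = c i" unfolding c_def x'_def by simp
    finally show ?thesis using assms(3)[OF i] by (simp add: x'_def c_def)
  qed
  ultimately obtain fs where fs: "length fs = M" "\<forall>f\<in>set fs. \<forall>\<alpha>. card {i\<in>\<Gamma>. f i = \<alpha>} = r \<alpha>"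
     "\<forall>\<alpha>. \<forall>i\<in>\<Gamma>. x' \<alpha> i = length (filter (\<lambda>f. f i = \<alpha>) fs)"
    using decomposition_into_assignments[OF assms(1)] by blast
  have "x \<alpha> i = length (filter (\<lambda>f. f i = \<alpha>) fs)" if "\<alpha> \<noteq> 0" "i \<in> \<Gamma>" for \<alpha> i
    using fs(3)[rule_format, OF that(2), of \<alpha>] that(1) by (simp add: x'_def)
  then show ?thesis using fs(1,2) by (intro exI[of _ fs]) (simp add: r_def)
qed

lemma sum_const_eq_rep_add: "(\<Sum>i\<in>S. c) = rep_add c (card S)"
proof (cases "finite S")
  case True
  then show ?thesis by (induction S rule: finite_induct) (simp_all add: rep_add_def add.commute)
qed (simp add: rep_add_def)

lemma sum_eq_sum_rep_add_card_fibres: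
  fixes f :: "'i \<Rightarrow> 'a::{comm_monoid_add,finite}"
  assumes "finite \<Gamma>"
  shows "(\<Sum>i\<in>\<Gamma>. f i) = (\<Sum>\<alpha>\<in>UNIV. rep_add \<alpha> (card {i\<in>\<Gamma>. f i = \<alpha>}))"
proof -
  have "(\<Sum>i\<in>\<Gamma>. f i) = (\<Sum>\<alpha>\<in>UNIV. \<Sum>i\<in>{i\<in>\<Gamma>. f i = \<alpha>}. f i)"
    using sum.group[OF assms finite_UNIV, of f f] by simp
  also have "\<dots> = (\<Sum>\<alpha>\<in>UNIV. \<Sum>i\<in>{i\<in>\<Gamma>. f i = \<alpha>}. \<alpha>)" by (intro sum.cong) auto
  finally show ?thesis by (simp add: sum_const_eq_rep_add)
qed

lemma extend_by_zero_in_CCk: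
  fixes f :: "'i \<Rightarrow> 'a::{ring_1,finite}"
  assumes "finite \<Gamma>" "(\<Sum>\<alpha>\<in>UNIV - {0}. rep_add \<alpha> (k \<alpha>)) = 0"
    and "\<And>\<alpha>. \<alpha> \<noteq> 0 \<Longrightarrow> card {i\<in>\<Gamma>. f i = \<alpha>} = k \<alpha>"
  shows "(\<lambda>i. if i \<in> \<Gamma> then f i else 0) \<in> CCk \<Gamma> k"
proof -
  have "(\<Sum>i\<in>\<Gamma>. f i) = rep_add 0 (card {i\<in>\<Gamma>. f i = 0})
      + (\<Sum>\<alpha>\<in>UNIV - {0}. rep_add \<alpha> (card {i\<in>\<Gamma>. f i = \<alpha>}))"
    unfolding sum_eq_sum_rep_add_card_fibres[OF assms(1)] by (rule sum.remove) auto
  also have "\<dots> = 0" using assms(2,3) by (simp add: rep_add_def)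
  moreover have "kappa \<Gamma> (\<lambda>i. if i \<in> \<Gamma> then f i else 0) \<alpha> = card {i\<in>\<Gamma>. f i = \<alpha>}" for \<alpha>
    unfolding kappa_def by (intro arg_cong[where f = card]) auto
  ultimately show ?thesis using assms(3) by (simp add: CCk_def CC_def)
qed

lemma finite_CCk:
  fixes k :: "'a::{ring_1,finite} \<Rightarrow> nat"
  assumes "finite \<Gamma>"
  shows "finite (CCk \<Gamma> k)"
proof (rule finite_subset)
  show "finite {a. \<forall>i. (i \<in> \<Gamma> \<longrightarrow> a i \<in> (UNIV :: 'a set)) \<and> (i \<notin> \<Gamma> \<longrightarrow> a i = 0)}"
    using assms by (rule finite_set_of_finite_funs) simp
qed (auto simp: CCk_def CC_def)

lemma sum_count_list_filter:
  assumes "finite A" "set ys \<subseteq> A"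
  shows "(\<Sum>a\<in>{a\<in>A. P a}. count_list ys a) = length (filter P ys)"
proof -
  have "count_list ys a = count_list (filter P ys) a" if "P a" for a
    using that by (induction ys) auto
  then have "(\<Sum>a\<in>{a\<in>A. P a}. count_list ys a) = (\<Sum>a\<in>{a\<in>A. P a}. count_list (filter P ys) a)"
    by simp
  also have "\<dots> = length (filter P ys)" using assms by (intro sum_count_set) auto
  finally show ?thesis .
qed

theorem proposition3:
  fixes M :: nat and k :: "'a::{ring_1,finite} \<Rightarrow> nat" and \<Gamma> :: "'i set"
    and x :: "'a \<Rightarrow> 'i \<Rightarrow> nat"
  assumes "finite \<Gamma>"
    and "(\<Sum>\<alpha>\<in>UNIV - {0}. rep_add \<alpha> (k \<alpha>)) = 0"
    and "\<And>\<alpha>. \<alpha> \<noteq> 0 \<Longrightarrow> (\<Sum>i\<in>\<Gamma>. x \<alpha> i) = k \<alpha> * M"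
    and "\<And>i. i \<in> \<Gamma> \<Longrightarrow> (\<Sum>\<alpha>\<in>UNIV - {0}. x \<alpha> i) \<le> M"
  shows "\<exists>w :: ('i \<Rightarrow> 'a) \<Rightarrow> nat.
           (\<Sum>a\<in>CCk \<Gamma> k. w a) = M \<and>
           (\<forall>\<alpha> i. \<alpha> \<noteq> 0 \<longrightarrow> i \<in> \<Gamma> \<longrightarrow> x \<alpha> i = (\<Sum>a\<in>{a\<in>CCk \<Gamma> k. a i = \<alpha>}. w a))"
proof -
  obtain fs where fs: "length fs = M" "\<forall>f\<in>set fs. \<forall>\<alpha>. \<alpha> \<noteq> 0 \<longrightarrow> card {i\<in>\<Gamma>. f i = \<alpha>} = k \<alpha>"
    "\<forall>\<alpha> i. \<alpha> \<noteq> 0 \<longrightarrow> i \<in> \<Gamma> \<longrightarrow> x \<alpha> i = length (filter (\<lambda>f. f i = \<alpha>) fs)"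
    using decomposition_into_partial_assignments[OF assms(1,3,4)] by blast
  define as where "as = map (\<lambda>f i. if i \<in> \<Gamma> then f i else 0) fs"
  have as_CCk: "set as \<subseteq> CCk \<Gamma> k"
    using fs(2) extend_by_zero_in_CCk[OF assms(1,2)] by (auto simp: as_def)
  have "(\<Sum>a\<in>{a\<in>CCk \<Gamma> k. a i = \<alpha>}. count_list as a) = x \<alpha> i" if "\<alpha> \<noteq> 0" "i \<in> \<Gamma>" for \<alpha> i
    using sum_count_list_filter[OF finite_CCk[OF assms(1)] as_CCk] fs(3) that
    by (simp add: as_def filter_map o_def)
  moreover have "(\<Sum>a\<in>CCk \<Gamma> k. count_list as a) = M"
    using sum_count_set[OF as_CCk finite_CCk[OF assms(1)]] fs(1) by (simp add: as_def)
  ultimately show ?thesis by (intro exI[of _ "count_list as"]) auto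
qed

end
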